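(* Let $f(\cdot;\theta_A)$, $\theta_A\in\mathbb R^{M_A}$ (model A), and $g(\cdot;\theta_B)$, $\theta_B\in\mathbb R^{M_B}$ (model B), be models on $\mathbb R^d$, and suppose there exists a critical mapping $\mathcal P:\mathbb R^{M_A}\to\mathbb R^{M_B}$ from model A to model B. Then for every $f^*\in\mathcal F_A=\{f(\cdot;\theta_A):\theta_A\in\mathbb R^{M_A}\}$ we have $f^*\in\mathcal F_B$ and $O_g(f^* )\leq O_f(f^* )\leq M_A$.
   Context: A model is a map $h:\mathbb R^d\times\mathbb R^M\to\mathbb R$, $(x,\theta)\mapsto h(x;\theta)=h_\theta(x)$, differentiable in both $x$ and $\theta$; its function space is $\{h_\theta:\theta\in\mathbb R^M\}$. A map $\mathcal P:\mathbb R^{M_A}\to\mathbb R^{M_B}$ is a critical mapping from model A ($f$) to model B ($g$) if for every $\theta\in\mathbb R^{M_A}$: (i) $f(\cdot;\theta)=g(\cdot;\mathcal P(\theta))$; (ii) for every finite dataset $S=\{(x_i,y_i)\}_{i=1}^n\subset\mathbb R^d\times\mathbb R$ with mean-squared risk $R_S(h)=\frac12\sum_{i=1}^n(h(x_i)-y_i)^2$, if the gradient of $\theta_A\mapsto R_S(f(\cdot;\theta_A))$ vanishes at $\theta$, then the gradient of $\theta_B\mapsto R_S(g(\cdot;\theta_B))$ vanishes at $\mathcal P(\theta)$. The loss $\ell:\mathbb R\times\mathbb R\to[0,\infty)$ is continuously differentiable with $\ell(u,v)=0$ iff $u=v$. For a model $h$ and $f^*$ in its function space, the target set is $\mathcal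 M_{f^*}=\{\theta:h_\theta=f^*\}$; a dataset from $f^*$ of size $n$ is $\{(x_i,f^*(x_i))\}_{i=1}^n$ with empirical loss $\frac1n\sum_i\ell(u(x_i),f^*(x_i))$ for a function $u$ (identically $0$ if $n=0$); the tangent hyperplane at $\theta'$ is $\{h(\cdot;\theta')+a^\top\nabla_\theta h(\cdot;\theta'):a\in\mathbb R^M\}$; $f^*$ has $n$-sample LLR-guarantee (for model $h$) if there are a dataset of size $n$ from $f^*$ and $\theta'\in\mathcal M_{f^*}$ such that the set of minimizers of the empirical loss over the tangent hyperplane at $\theta'$ is exactly $\{f^*\}$. The optimistic sample size $O_h(f^* )$ is the smallest $n\geq0$ such that $f^*$ has $n$-sample LLR-guarantee for model $h$. *)

theory Defs
  imports "HOL-Analysis.Analysis" "HOL-Library.Extended_Nat"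
begin

text \<open>A model h(x;theta) with inputs x in R^d (type real^'d) and parameters
theta in R^M (type real^'m, M = CARD('m)), differentiable in x and in theta.\<close>
definition is_model :: "(real^'d \<Rightarrow> real^'m \<Rightarrow> real) \<Rightarrow> bool" where
  "is_model h \<longleftrightarrow>
     (\<forall>x \<theta>. (\<lambda>t. h x t) differentiable (at \<theta>)) \<and>
     (\<forall>x \<theta>. (\<lambda>y. h y \<theta>) differentiable (at x))"

definition fun_space :: "(real^'d \<Rightarrow> real^'m \<Rightarrow> real) \<Rightarrow> (real^'d \<Rightarrow> real) set" where
  "fun_space h = {u. \<exists>\<theta>. u = (\<lambda>x. h x \<theta>)}"

definition sq_risk :: "((real^'d) \<times> real) list \<Rightarrow> (real^'d \<Rightarrow> real) \<Rightarrow> real" where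
  "sq_risk S u = (1/2) * (\<Sum>(x,y)\<leftarrow>S. (u x - y)^2)"

definition critical_mapping ::
  "(real^'d \<Rightarrow> real^'ma \<Rightarrow> real) \<Rightarrow> (real^'d \<Rightarrow> real^'mb \<Rightarrow> real)
    \<Rightarrow> (real^'ma \<Rightarrow> real^'mb) \<Rightarrow> bool" where
  "critical_mapping f g P \<longleftrightarrow>
     (\<forall>\<theta>. (\<lambda>x. f x \<theta>) = (\<lambda>x. g x (P \<theta>))) \<and>
     (\<forall>\<theta> (S::((real^'d) \<times> real) list).
        ((\<lambda>t. sq_risk S (\<lambda>x. f x t)) has_derivative (\<lambda>_. 0)) (at \<theta>) \<longrightarrow>
        ((\<lambda>t. sq_risk S (\<lambda>x. g x t)) has_derivative (\<lambda>_. 0)) (at (P \<theta>)))"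

definition admissible_loss :: "(real \<Rightarrow> real \<Rightarrow> real) \<Rightarrow> bool" where
  "admissible_loss l \<longleftrightarrow>
     (\<exists>l'. (\<forall>p. ((\<lambda>q. l (fst q) (snd q)) has_derivative blinfun_apply (l' p)) (at p))
           \<and> continuous_on UNIV l') \<and>
     (\<forall>u v. l u v \<ge> 0) \<and> (\<forall>u v. l u v = 0 \<longleftrightarrow> u = v)"

text \<open>Empirical loss of u on the dataset from fstar with sample points xs
  (identically 0 when xs is empty, since division by 0 is 0).\<close>
definition emp_loss ::
  "(real \<Rightarrow> real \<Rightarrow> real) \<Rightarrow> (real^'d \<Rightarrow> real) \<Rightarrow> (real^'d) list \<Rightarrow> (real^'d \<Rightarrow> real) \<Rightarrow> real" where
  "emp_loss l fstar xs u = (\<Sum>x\<leftarrow>xs. l (u x) (fstar x)) / real (length xs)"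

definition target_set :: "(real^'d \<Rightarrow> real^'m \<Rightarrow> real) \<Rightarrow> (real^'d \<Rightarrow> real) \<Rightarrow> (real^'m) set" where
  "target_set h fstar = {\<theta>. (\<lambda>x. h x \<theta>) = fstar}"

text \<open>Tangent hyperplane at theta': h(.;theta') + a^T grad_theta h(.;theta'),
  the directional derivative being the Frechet derivative in theta applied to a.\<close>
definition tangent_hyperplane ::
  "(real^'d \<Rightarrow> real^'m \<Rightarrow> real) \<Rightarrow> real^'m \<Rightarrow> (real^'d \<Rightarrow> real) set" where
  "tangent_hyperplane h \<theta>' =
     {u. \<exists>a. u = (\<lambda>x. h x \<theta>' + frechet_derivative (\<lambda>t. h x t) (at \<theta>') a)}"

definition has_LLR_guarantee ::
  "(real \<Rightarrow> real \<Rightarrow> real) \<Rightarrow> (real^'d \<Rightarrow> real^'m \<Rightarrow> real) \<Rightarrow> (real^'d \<Rightarrow> real) \<Rightarrow> nat \<Rightarrow> bool" where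
  "has_LLR_guarantee l h fstar n \<longleftrightarrow>
     (\<exists>xs \<theta>'. length xs = n \<and> \<theta>' \<in> target_set h fstar \<and>
        {u \<in> tangent_hyperplane h \<theta>'. \<forall>v \<in> tangent_hyperplane h \<theta>'.
            emp_loss l fstar xs u \<le> emp_loss l fstar xs v} = {fstar})"

definition optimistic_sample_size ::
  "(real \<Rightarrow> real \<Rightarrow> real) \<Rightarrow> (real^'d \<Rightarrow> real^'m \<Rightarrow> real) \<Rightarrow> (real^'d \<Rightarrow> real) \<Rightarrow> enat" where
  "optimistic_sample_size l h fstar =
     (if \<exists>n. has_LLR_guarantee l h fstar n
      then enat (LEAST n. has_LLR_guarantee l h fstar n) else \<infinity>)"

end

theory Submission
  imports Defs
begin

text \<open>Since the loss is nonnegative and vanishes only on the diagonal, and fstar lies on the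
tangent hyperplane at any \<theta>' of the target set with zero loss, the minimizers of the
empirical loss over that hyperplane are its zero-loss points. Hence fstar has an n-sample
LLR-guarantee iff for some \<theta>' in the target set there are n points whose parameter gradients
span all parameter gradients at \<theta>'. A basis of that span gives the bound by the number of
parameters. A linear relation sum c_i grad f(x_i; \<theta>) = 0 says precisely that \<theta> is a critical
point of the square risk on the data (x_i, f(x_i; \<theta>) - c_i); the critical mapping turns it into a
critical point P \<theta> of the risk of g on the same data, i.e. into the same relation among the
gradients of g at P \<theta>. So spanning point sets for f are spanning for g, and the optimistic
sample size can only drop.\<close>

definition param_grad :: "(real^'d \<Rightarrow> real^'m \<Rightarrow> real) \<Rightarrow> real^'m \<Rightarrow> real^'d \<Rightarrow> real^'m" where
  "param_grad h \<theta> x = (\<chi> j. frechet_derivative (\<lambda>t. h x t) (at \<theta>) (axis j 1))"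

lemma has_derivative_param_grad:
  assumes "is_model h"
  shows "((\<lambda>t. h x t) has_derivative (\<lambda>a. param_grad h \<theta> x \<bullet> a)) (at \<theta>)"
proof -
  let ?L = "frechet_derivative (\<lambda>t. h x t) (at \<theta>)"
  have deriv: "((\<lambda>t. h x t) has_derivative ?L) (at \<theta>)"
    using assms unfolding is_model_def by (simp add: frechet_derivative_works)
  have "?L = (\<lambda>a. param_grad h \<theta> x \<bullet> a)"
  proof
    fix a
    have lin: "linear ?L" using deriv has_derivative_linear by blast
    have "?L a = ?L (\<Sum>i\<in>UNIV. (a$i) *s axis i 1)" by (simp add: basis_expansion)
    also have "\<dots> = (\<Sum>i\<in>UNIV. (a$i) * ?L (axis i 1))"
      using lin by (simp add: linear_sum linear_scale scalar_mult_eq_scaleR)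
    also have "\<dots> = param_grad h \<theta> x \<bullet> a"
      by (simp add: param_grad_def inner_vec_def mult.commute)
    finally show "?L a = param_grad h \<theta> x \<bullet> a" .
  qed
  with deriv show ?thesis by simp
qed

lemma frechet_derivative_param_grad:
  "is_model h \<Longrightarrow> frechet_derivative (\<lambda>t. h x t) (at \<theta>) a = param_grad h \<theta> x \<bullet> a"
  using frechet_derivative_at[OF has_derivative_param_grad] by metis

lemma tangent_hyperplane_param_grad:
  "is_model h \<Longrightarrow> tangent_hyperplane h \<theta> = {\<lambda>x. h x \<theta> + param_grad h \<theta> x \<bullet> a | a. True}"
  by (simp add: tangent_hyperplane_def frechet_derivative_param_grad)

lemma emp_loss_nonneg: "admissible_loss l \<Longrightarrow> 0 \<le> emp_loss l fstar xs u"
  unfolding emp_loss_def admissible_loss_def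
  by (intro divide_nonneg_nonneg sum_list_nonneg) auto

lemma emp_loss_eq_0_iff:
  assumes "admissible_loss l"
  shows "emp_loss l fstar xs u = 0 \<longleftrightarrow> (\<forall>x\<in>set xs. u x = fstar x)"
proof (cases "xs = []")
  case False
  have nonneg: "\<And>v. v \<in> set (map (\<lambda>x. l (u x) (fstar x)) xs) \<Longrightarrow> 0 \<le> v"
    and zero_iff: "\<And>x. l (u x) (fstar x) = 0 \<longleftrightarrow> u x = fstar x"
    using assms by (auto simp: admissible_loss_def)
  have "emp_loss l fstar xs u = 0 \<longleftrightarrow> (\<Sum>x\<leftarrow>xs. l (u x) (fstar x)) = 0"
    using False by (simp add: emp_loss_def)
  also have "\<dots> \<longleftrightarrow> (\<forall>x\<in>set xs. u x = fstar x)"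
    by (subst sum_list_nonneg_eq_0_iff[OF nonneg]) (auto simp: zero_iff)
  finally show ?thesis .
qed (simp add: emp_loss_def)

lemma in_span_iff_orthogonal:
  fixes w :: "'a::euclidean_space"
  shows "w \<in> span B \<longleftrightarrow> (\<forall>a. (\<forall>v\<in>B. v \<bullet> a = 0) \<longrightarrow> w \<bullet> a = 0)"
proof
  assume "w \<in> span B"
  then show "\<forall>a. (\<forall>v\<in>B. v \<bullet> a = 0) \<longrightarrow> w \<bullet> a = 0"
    using orthogonal_to_span by (metis orthogonal_def inner_commute)
next
  assume orth: "\<forall>a. (\<forall>v\<in>B. v \<bullet> a = 0) \<longrightarrow> w \<bullet> a = 0"
  have "w \<in> (span B)\<^sup>\<bottom>\<^sup>\<bottom>"
    unfolding orthogonal_comp_def orthogonal_def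
  proof (intro CollectI ballI)
    fix y assume "y \<in> {x. \<forall>v\<in>span B. v \<bullet> x = 0}"
    then have "\<forall>v\<in>B. v \<bullet> y = 0" using span_base by blast
    then have "w \<bullet> y = 0" using orth by blast
    then show "y \<bullet> w = 0" by (simp add: inner_commute)
  qed
  then show "w \<in> span B" by (simp add: orthogonal_comp_self)
qed

lemma span_image_eq_sum:
  assumes "finite X" "w \<in> span (V ` X)"
  obtains c where "w = (\<Sum>x\<in>X. c x *\<^sub>R V x)"
  using assms
proof (induction X arbitrary: w thesis rule: finite_induct)
  case empty
  then show ?case by simp
next
  case (insert x X)
  obtain k where "w - k *\<^sub>R V x \<in> span (V ` X)"
    using insert.prems(2) by (auto simp: span_insert)
  then obtain c where c: "w - k *\<^sub>R V x = (\<Sum>y\<in>X. c y *\<^sub>R V y)"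
    using insert.IH by blast
  have "(\<Sum>y\<in>X. (c(x := k)) y *\<^sub>R V y) = (\<Sum>y\<in>X. c y *\<^sub>R V y)"
    using insert.hyps(2) by (intro sum.cong) auto
  then have "w = (\<Sum>y\<in>insert x X. (c(x := k)) y *\<^sub>R V y)"
    using c insert.hyps by (simp add: algebra_simps)
  then show ?case by (rule insert.prems(1))
qed

lemma tangent_minimizers_eq_singleton_iff:
  assumes h: "is_model h" and l: "admissible_loss l" and \<theta>: "\<theta> \<in> target_set h fstar"
  shows "{u \<in> tangent_hyperplane h \<theta>. \<forall>v \<in> tangent_hyperplane h \<theta>.
            emp_loss l fstar xs u \<le> emp_loss l fstar xs v} = {fstar}
         \<longleftrightarrow> range (param_grad h \<theta>) \<subseteq> span (param_grad h \<theta> ` set xs)"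
    (is "?Min = _ \<longleftrightarrow> _")
proof -
  let ?u = "\<lambda>a x. fstar x + param_grad h \<theta> x \<bullet> a"
  let ?K = "{a. \<forall>x\<in>set xs. param_grad h \<theta> x \<bullet> a = 0}"
  have fstar: "fstar = (\<lambda>x. h x \<theta>)" using \<theta> by (simp add: target_set_def)
  have T: "tangent_hyperplane h \<theta> = range ?u"
    by (auto simp: tangent_hyperplane_param_grad[OF h] fstar)
  let ?E = "emp_loss l fstar xs"
  have "fstar = ?u 0" by simp
  then have fstar_T: "fstar \<in> tangent_hyperplane h \<theta>" unfolding T by blast
  have E_fstar: "?E fstar = 0" by (simp add: emp_loss_eq_0_iff[OF l])
  have minimal_iff: "(\<forall>v \<in> tangent_hyperplane h \<theta>. ?E u \<le> ?E v) \<longleftrightarrow> ?E u = 0" for u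
  proof
    assume "\<forall>v \<in> tangent_hyperplane h \<theta>. ?E u \<le> ?E v"
    then have "?E u \<le> ?E fstar" using fstar_T by blast
    then show "?E u = 0"
      using E_fstar emp_loss_nonneg[OF l, of fstar xs u] by linarith
  qed (simp add: emp_loss_nonneg[OF l])
  have zero_iff: "?E (?u a) = 0 \<longleftrightarrow> a \<in> ?K" for a
    by (simp add: emp_loss_eq_0_iff[OF l])
  have "?Min = {u \<in> range ?u. ?E u = 0}"
    using minimal_iff by (simp add: T)
  also have "\<dots> = ?u ` ?K"
    using zero_iff by blast
  finally have "?Min = {fstar} \<longleftrightarrow> ?u ` ?K = {fstar}" by simp
  also have "\<dots> \<longleftrightarrow> (\<forall>a\<in>?K. ?u a = fstar)"
  proof
    assume "\<forall>a\<in>?K. ?u a = fstar"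
    then have "?u ` ?K = (\<lambda>_. fstar) ` ?K" by simp
    also have "\<dots> = {fstar}" by (rule image_constant[of 0]) simp
    finally show "?u ` ?K = {fstar}" .
  qed blast
  also have "\<dots> \<longleftrightarrow> (\<forall>z. \<forall>a\<in>?K. param_grad h \<theta> z \<bullet> a = 0)"
    by (auto simp: fun_eq_iff)
  also have "\<dots> \<longleftrightarrow> range (param_grad h \<theta>) \<subseteq> span (param_grad h \<theta> ` set xs)"
    by (simp add: image_subset_iff in_span_iff_orthogonal)
  finally show ?thesis .
qed

lemma has_LLR_guarantee_iff_span:
  assumes "is_model h" and "admissible_loss l"
  shows "has_LLR_guarantee l h fstar n \<longleftrightarrow>
    (\<exists>xs \<theta>. length xs = n \<and> \<theta> \<in> target_set h fstar \<and>
       range (param_grad h \<theta>) \<subseteq> span (param_grad h \<theta> ` set xs))"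
  unfolding has_LLR_guarantee_def using tangent_minimizers_eq_singleton_iff[OF assms] by blast

lemma has_LLR_guarantee_le_card:
  fixes h :: "real^'d \<Rightarrow> real^'m \<Rightarrow> real"
  assumes h: "is_model h" and l: "admissible_loss l" and fstar: "fstar \<in> fun_space h"
  shows "\<exists>n \<le> CARD('m). has_LLR_guarantee l h fstar n"
proof -
  obtain \<theta> where "fstar = (\<lambda>x. h x \<theta>)" using fstar by (auto simp: fun_space_def)
  then have \<theta>: "\<theta> \<in> target_set h fstar" by (simp add: target_set_def)
  obtain B where B: "B \<subseteq> range (param_grad h \<theta>)" "independent B"
      "range (param_grad h \<theta>) \<subseteq> span B"
    by (rule basis_exists)
  then have "finite B" and card_B: "card B \<le> CARD('m)"
    using independent_bound[OF B(2)] by auto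
  obtain X where "inj_on (param_grad h \<theta>) X" and X: "B = param_grad h \<theta> ` X"
    using B(1) subset_image_inj by (metis subset_UNIV)
  then have "finite X" and card_X: "card X = card B"
    using \<open>finite B\<close> by (auto simp: card_image finite_image_iff)
  obtain xs where xs: "set xs = X" "distinct xs"
    using finite_distinct_list[OF \<open>finite X\<close>] by blast
  have "has_LLR_guarantee l h fstar (length xs)"
    unfolding has_LLR_guarantee_iff_span[OF h l] using \<theta> B(3) X xs(1) by blast
  moreover have "length xs \<le> CARD('m)"
    using distinct_card[OF xs(2)] xs(1) card_X card_B by simp
  ultimately show ?thesis by blast
qed

lemma has_derivative_sq_risk:
  assumes "is_model h"
  shows "((\<lambda>t. sq_risk S (\<lambda>x. h x t)) has_derivative
           (\<lambda>a. (\<Sum>(x,y)\<leftarrow>S. (h x \<theta> - y) *\<^sub>R param_grad h \<theta> x) \<bullet> a)) (at \<theta>)"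
proof (induction S)
  case Nil
  then show ?case by (simp add: sq_risk_def)
next
  case (Cons p S)
  obtain x y where p: "p = (x, y)" by fastforce
  have "((\<lambda>t. (1/2) * (h x t - y)^2) has_derivative
      (\<lambda>a. (h x \<theta> - y) * (param_grad h \<theta> x \<bullet> a))) (at \<theta>)"
    by (rule derivative_eq_intros has_derivative_param_grad[OF assms] | simp add: mult.commute)+
  from has_derivative_add[OF this Cons.IH] show ?case
    by (simp add: p sq_risk_def algebra_simps inner_add_left)
qed

lemma sq_risk_critical_iff:
  assumes "is_model h"
  shows "((\<lambda>t. sq_risk S (\<lambda>x. h x t)) has_derivative (\<lambda>_. 0)) (at \<theta>) \<longleftrightarrow>
         (\<Sum>(x,y)\<leftarrow>S. (h x \<theta> - y) *\<^sub>R param_grad h \<theta> x) = 0"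
    (is "_ \<longleftrightarrow> ?grad = 0")
proof
  assume "((\<lambda>t. sq_risk S (\<lambda>x. h x t)) has_derivative (\<lambda>_. 0)) (at \<theta>)"
  from has_derivative_unique[OF this has_derivative_sq_risk[OF assms]]
  have "?grad \<bullet> ?grad = 0" by metis
  then show "?grad = 0" by simp
qed (use has_derivative_sq_risk[OF assms, of S \<theta>] in simp)

lemma critical_mapping_eq: "critical_mapping f g P \<Longrightarrow> g x (P \<theta>) = f x \<theta>"
  unfolding critical_mapping_def by metis

lemma critical_mapping_fun_space:
  assumes "critical_mapping f g P"
  shows "fun_space f \<subseteq> fun_space g"
proof
  fix u assume "u \<in> fun_space f"
  then obtain \<theta> where "u = (\<lambda>x. f x \<theta>)" by (auto simp: fun_space_def)
  then have "u = (\<lambda>x. g x (P \<theta>))" by (simp add: critical_mapping_eq[OF assms])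
  then show "u \<in> fun_space g" by (auto simp: fun_space_def)
qed

lemma critical_mapping_target_set:
  "critical_mapping f g P \<Longrightarrow> \<theta> \<in> target_set f fstar \<Longrightarrow> P \<theta> \<in> target_set g fstar"
  by (simp add: target_set_def critical_mapping_eq)

lemma critical_mapping_param_grad_relation:
  fixes f :: "real^'d \<Rightarrow> real^'ma \<Rightarrow> real" and g :: "real^'d \<Rightarrow> real^'mb \<Rightarrow> real"
  assumes f: "is_model f" and g: "is_model g" and P: "critical_mapping f g P"
    and rel: "(\<Sum>(x,c)\<leftarrow>L. c *\<^sub>R param_grad f \<theta> x) = 0"
  shows "(\<Sum>(x,c)\<leftarrow>L. c *\<^sub>R param_grad g (P \<theta>) x) = 0"
proof -
  \<comment> \<open>labels chosen so that the residuals of f at \<theta>, and hence of g at P \<theta>, are the c\<close>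
  define S where "S = map (\<lambda>(x,c). (x, f x \<theta> - c)) L"
  have residuals: "(\<Sum>(x,y)\<leftarrow>S. (h x - y) *\<^sub>R V x) = (\<Sum>(x,c)\<leftarrow>L. c *\<^sub>R V x)"
    if "\<And>x. h x = f x \<theta>" for h and V :: "real^'d \<Rightarrow> 'v::real_vector"
    unfolding S_def using that by (induction L) auto
  have "((\<lambda>t. sq_risk S (\<lambda>x. f x t)) has_derivative (\<lambda>_. 0)) (at \<theta>)"
    unfolding sq_risk_critical_iff[OF f] using rel by (simp add: residuals)
  then have "((\<lambda>t. sq_risk S (\<lambda>x. g x t)) has_derivative (\<lambda>_. 0)) (at (P \<theta>))"
    using P unfolding critical_mapping_def by blast
  then show ?thesis
    unfolding sq_risk_critical_iff[OF g] using critical_mapping_eq[OF P] by (simp add: residuals)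
qed

lemma critical_mapping_param_grad_span:
  fixes f :: "real^'d \<Rightarrow> real^'ma \<Rightarrow> real" and g :: "real^'d \<Rightarrow> real^'mb \<Rightarrow> real"
  assumes f: "is_model f" and g: "is_model g" and P: "critical_mapping f g P"
    and "finite X" and z: "param_grad f \<theta> z \<in> span (param_grad f \<theta> ` X)"
  shows "param_grad g (P \<theta>) z \<in> span (param_grad g (P \<theta>) ` X)"
proof -
  obtain c where c: "param_grad f \<theta> z = (\<Sum>x\<in>X. c x *\<^sub>R param_grad f \<theta> x)"
    using span_image_eq_sum[OF \<open>finite X\<close> z] by blast
  obtain xs where xs: "set xs = X" "distinct xs"
    using finite_distinct_list[OF \<open>finite X\<close>] by blast
  define L where "L = (z, -1) # map (\<lambda>x. (x, c x)) xs"
  have L: "(\<Sum>(y,d)\<leftarrow>L. d *\<^sub>R V y) = (\<Sum>x\<in>X. c x *\<^sub>R V x) - V z"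
    for V :: "real^'d \<Rightarrow> 'v::real_vector"
    using xs by (simp add: L_def sum_list_distinct_conv_sum_set o_def)
  have "(\<Sum>(y,d)\<leftarrow>L. d *\<^sub>R param_grad f \<theta> y) = 0"
    unfolding L c by simp
  from critical_mapping_param_grad_relation[OF f g P this]
  have "param_grad g (P \<theta>) z = (\<Sum>x\<in>X. c x *\<^sub>R param_grad g (P \<theta>) x)"
    unfolding L by simp
  then show ?thesis
    by (simp add: span_sum span_scale span_base)
qed

lemma critical_mapping_LLR_guarantee:
  assumes f: "is_model f" and g: "is_model g" and l: "admissible_loss l"
    and P: "critical_mapping f g P" and guarantee: "has_LLR_guarantee l f fstar n"
  shows "has_LLR_guarantee l g fstar n"
proof -
  obtain xs \<theta> where "length xs = n" and \<theta>: "\<theta> \<in> target_set f fstar"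
    and "range (param_grad f \<theta>) \<subseteq> span (param_grad f \<theta> ` set xs)"
    using guarantee unfolding has_LLR_guarantee_iff_span[OF f l] by blast
  moreover have "P \<theta> \<in> target_set g fstar"
    using critical_mapping_target_set[OF P \<theta>] .
  ultimately show ?thesis
    unfolding has_LLR_guarantee_iff_span[OF g l]
    using critical_mapping_param_grad_span[OF f g P] by blast
qed

lemma optimistic_sample_size_le:
  assumes "has_LLR_guarantee l h fstar n"
  shows "optimistic_sample_size l h fstar \<le> enat n"
proof -
  have "(LEAST n. has_LLR_guarantee l h fstar n) \<le> n"
    using assms by (rule Least_le)
  then show ?thesis
    using assms by (auto simp: optimistic_sample_size_def)
qed

lemma optimistic_sample_size_mono:
  assumes "\<And>n. has_LLR_guarantee l h fstar n \<Longrightarrow> has_LLR_guarantee l h' fstar n"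
  shows "optimistic_sample_size l h' fstar \<le> optimistic_sample_size l h fstar"
proof (cases "\<exists>n. has_LLR_guarantee l h fstar n")
  case True
  define m where "m = (LEAST n. has_LLR_guarantee l h fstar n)"
  have "has_LLR_guarantee l h fstar m"
    unfolding m_def using True by (rule LeastI_ex)
  then have "optimistic_sample_size l h' fstar \<le> enat m"
    by (intro optimistic_sample_size_le assms)
  also have "\<dots> = optimistic_sample_size l h fstar"
    using True by (simp add: optimistic_sample_size_def m_def)
  finally show ?thesis .
qed (simp add: optimistic_sample_size_def)

theorem mainTheorem10:
  fixes f :: "real^'d \<Rightarrow> real^'ma \<Rightarrow> real"
    and g :: "real^'d \<Rightarrow> real^'mb \<Rightarrow> real"
    and l :: "real \<Rightarrow> real \<Rightarrow> real"
    and fstar :: "real^'d \<Rightarrow> real"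
  assumes "is_model f" and "is_model g"
    and "\<exists>P. critical_mapping f g P"
    and "admissible_loss l"
    and "fstar \<in> fun_space f"
  shows "fstar \<in> fun_space g \<and>
         optimistic_sample_size l g fstar \<le> optimistic_sample_size l f fstar \<and>
         optimistic_sample_size l f fstar \<le> enat CARD('ma)"
proof (intro conjI)
  obtain P where P: "critical_mapping f g P" using assms(3) by blast
  show "fstar \<in> fun_space g"
    using critical_mapping_fun_space[OF P] assms(5) by blast
  show "optimistic_sample_size l g fstar \<le> optimistic_sample_size l f fstar"
    by (rule optimistic_sample_size_mono, rule critical_mapping_LLR_guarantee[OF assms(1,2,4) P])
  obtain n where "n \<le> CARD('ma)" and "has_LLR_guarantee l f fstar n"
    using has_LLR_guarantee_le_card[OF assms(1,4,5)] by blast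
  then have "optimistic_sample_size l f fstar \<le> enat n"
    by (simp add: optimistic_sample_size_le)
  also have "\<dots> \<le> enat CARD('ma)" using \<open>n \<le> CARD('ma)\<close> by simp
  finally show "optimistic_sample_size l f fstar \<le> enat CARD('ma)" .
qed

end
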